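(* Let $M=\{1,\dots,m\}$ with $m\ge2$, and $t_I=\sum_{i\in I}t_i$. The rational function $$\sum_{\substack{I\sqcup J=M\\ I,J\neq\emptyset}} t_I^{|I|-2}t_J^{|J|-2}-2t_M^{m-3}\left(\frac1{t_1}+\dots+\frac1{t_m}\right)$$ (sum over ordered pairs of disjoint nonempty subsets with union $M$) is a symmetric polynomial in $t_1,\dots,t_m$ which depends only on $t_M=t_1+\dots+t_m$, i.e. it equals $F(t_1+\dots+t_m)$ for some one-variable polynomial $F$. *)

theory Defs
  imports Complex_Main "HOL-Computational_Algebra.Polynomial"
begin

definition tsum :: "(nat \<Rightarrow> real) \<Rightarrow> nat set \<Rightarrow> real" where
  "tsum t I = (\<Sum>i\<in>I. t i)"

end

theory Submission
  imports Defs
begin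

(* Fix m in M and put M' = M - {m}. The involution I |-> M - I swaps the blocks containing m
   with those avoiding it, so the sum is twice the sum over I = insert m A, A a proper subset
   of M'. At x = t m we have t_I^(|I|-2) = x (x + t_A)^(|A|-1) / x, so this sum is G M' (t m) / t m
   for the Abel-type sum
     G N x = (SUM A proper subset of N. x (x + t_A)^(|A|-1) * t_(N-A)^(|N-A|-2)).
   Its derivative in x is (SUM a in N. G (N - {a}) (x + t a)) and G N 0 = t_N^(|N|-2).
   An explicit closed form satisfies the same recursion and initial value, so the two agree by
   induction on |N|; evaluating the closed form leaves -2 (m-2 choose 2) t_M^(m-4). *)

lemma tsum_insert: "finite A \<Longrightarrow> a \<notin> A \<Longrightarrow> tsum t (insert a A) = t a + tsum t A"
  unfolding tsum_def by simp

lemma tsum_remove: "finite A \<Longrightarrow> a \<in> A \<Longrightarrow> tsum t (A - {a}) = tsum t A - t a"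
  unfolding tsum_def by (simp add: sum_diff1)

lemma Diff_singleton_nonempty_if_card_ge_2:
  assumes "card M \<ge> 2"
  shows "M - {a} \<noteq> {}"
proof
  assume "M - {a} = {}"
  then have "card M \<le> card {a}"
    by (intro card_mono) auto
  with assms show False
    by simp
qed

definition block_weight :: "(nat \<Rightarrow> real) \<Rightarrow> nat set \<Rightarrow> real" where
  "block_weight t B = tsum t B powi (int (card B) - 2)"

definition abel_term :: "(nat \<Rightarrow> real) \<Rightarrow> nat set \<Rightarrow> real \<Rightarrow> real" where
  "abel_term t A x = (if A = {} then 1 else x * (x + tsum t A) ^ (card A - 1))"

lemma block_weight_insert:
  assumes "finite A" "a \<notin> A" "t a \<noteq> 0"
  shows "block_weight t (insert a A) = abel_term t A (t a) / t a"
proof (cases "A = {}")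
  case True
  then show ?thesis by (simp add: block_weight_def abel_term_def tsum_def power_int_minus divide_inverse)
next
  case False
  then have "card A \<ge> 1" using assms(1) by (simp add: Suc_le_eq card_gt_0_iff)
  then have e: "int (card (insert a A)) - 2 = int (card A - 1)" using assms by simp
  show ?thesis
    unfolding block_weight_def e power_int_of_nat using False assms by (simp add: abel_term_def tsum_insert)
qed

lemma abel_term_remove:
  assumes "finite A" "a \<in> A" "card A \<ge> 2"
  shows "abel_term t (A - {a}) (x + t a) = (x + t a) * (x + tsum t A) ^ (card A - 2)"
proof -
  have "A - {a} \<noteq> {}"
    using assms(3) by (rule Diff_singleton_nonempty_if_card_ge_2)
  moreover have "card (A - {a}) - 1 = card A - 2"
    using assms by simp
  ultimately show ?thesis
    using assms by (simp add: abel_term_def tsum_remove)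
qed

lemma has_real_derivative_abel_term:
  assumes "finite A"
  shows "(abel_term t A has_real_derivative (\<Sum>a\<in>A. abel_term t (A - {a}) (x + t a))) (at x)"
proof -
  consider "A = {}" | a where "A = {a}" | "card A \<ge> 2"
  proof (cases "card A \<ge> 2")
    case False
    then have "card A = 0 \<or> card A = 1" by linarith
    then show ?thesis using that assms by (auto simp: card_1_singleton_iff)
  qed
  then show ?thesis
  proof cases
    case 1
    then have "abel_term t A = (\<lambda>_. 1)" by (simp add: abel_term_def fun_eq_iff)
    then show ?thesis using 1 by simp
  next
    case (2 a)
    then have "abel_term t A = (\<lambda>x. x)" by (simp add: abel_term_def fun_eq_iff)
    then show ?thesis using 2 by (simp add: abel_term_def)
  next
    case 3
    define c where "c = tsum t A"
    define k where "k = card A - 2"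
    have "A \<noteq> {}" "card A - 1 = k + 1" using 3 by (auto simp: k_def)
    then have abel: "abel_term t A = (\<lambda>x. x * (x + c) ^ (k + 1))"
      by (simp add: abel_term_def fun_eq_iff c_def)
    have "(\<Sum>a\<in>A. abel_term t (A - {a}) (x + t a)) = (\<Sum>a\<in>A. x + t a) * (x + c) ^ k"
      using assms 3 by (simp add: abel_term_remove c_def k_def sum_distrib_right)
    also have "\<dots> = (real (k + 2) * x + c) * (x + c) ^ k"
      using 3 by (simp add: sum.distrib c_def k_def tsum_def)
    also have "\<dots> = (x + c) ^ (k + 1) + x * (real (k + 1) * (x + c) ^ k)"
      by (simp add: algebra_simps)
    finally have sum: "(\<Sum>a\<in>A. abel_term t (A - {a}) (x + t a))
        = (x + c) ^ (k + 1) + x * (real (k + 1) * (x + c) ^ k)" .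
    have "((\<lambda>x. x * (x + c) ^ (k + 1)) has_real_derivative
        (x + c) ^ (k + 1) + x * (real (k + 1) * (x + c) ^ k)) (at x)"
      by (intro derivative_eq_intros) auto
    then show ?thesis
      unfolding abel sum .
  qed
qed

definition abel_sum :: "(nat \<Rightarrow> real) \<Rightarrow> nat set \<Rightarrow> real \<Rightarrow> real" where
  "abel_sum t M x = (\<Sum>A\<in>{A. A \<subset> M}. abel_term t A x * block_weight t (M - A))"

lemma finite_psubsets: "finite M \<Longrightarrow> finite {A. A \<subset> M}"
  by (rule finite_subset[of _ "Pow M"]) auto

lemma sum_psubsets_sum_elements:
  assumes "finite M"
  shows "(\<Sum>A\<in>{A. A \<subset> M}. \<Sum>a\<in>A. f a (A - {a}) (M - A))
       = (\<Sum>a\<in>M. \<Sum>A\<in>{A. A \<subset> M - {a}}. f a A (M - {a} - A))"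
proof -
  have "(\<Sum>A\<in>{A. A \<subset> M}. \<Sum>a\<in>A. f a (A - {a}) (M - A))
      = (\<Sum>A\<in>{A. A \<subset> M}. \<Sum>a\<in>{a. a \<in> M \<and> a \<in> A}. f a (A - {a}) (M - A))"
    by (intro sum.cong) auto
  also have "\<dots> = (\<Sum>a\<in>M. \<Sum>A\<in>{A. A \<in> {A. A \<subset> M} \<and> a \<in> A}. f a (A - {a}) (M - A))"
    using finite_psubsets[OF assms] assms by (rule sum.swap_restrict)
  also have "\<dots> = (\<Sum>a\<in>M. \<Sum>A\<in>{A. A \<subset> M - {a}}. f a A (M - {a} - A))"
  proof (rule sum.cong[OF refl])
    fix a assume a: "a \<in> M"
    have diff: "M - {a} - (A - {a}) = M - A" if "a \<in> A" for A
      using that by blast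
    show "(\<Sum>A\<in>{A. A \<in> {A. A \<subset> M} \<and> a \<in> A}. f a (A - {a}) (M - A))
        = (\<Sum>A\<in>{A. A \<subset> M - {a}}. f a A (M - {a} - A))"
      by (intro sum.reindex_bij_witness[of _ "insert a" "\<lambda>A. A - {a}"]) (use a diff in auto)
  qed
  finally show ?thesis .
qed

lemma has_real_derivative_abel_sum:
  assumes "finite M"
  shows "(abel_sum t M has_real_derivative (\<Sum>a\<in>M. abel_sum t (M - {a}) (x + t a))) (at x)"
proof -
  have "((\<lambda>x. \<Sum>A\<in>{A. A \<subset> M}. abel_term t A x * block_weight t (M - A)) has_real_derivative
      (\<Sum>A\<in>{A. A \<subset> M}. (\<Sum>a\<in>A. abel_term t (A - {a}) (x + t a)) * block_weight t (M - A))) (at x)"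
    using assms by (intro DERIV_sum DERIV_cmult_right has_real_derivative_abel_term)
      (auto intro: finite_subset)
  also have "(\<Sum>A\<in>{A. A \<subset> M}. (\<Sum>a\<in>A. abel_term t (A - {a}) (x + t a)) * block_weight t (M - A))
      = (\<Sum>a\<in>M. abel_sum t (M - {a}) (x + t a))"
    using sum_psubsets_sum_elements[OF assms, of "\<lambda>a A B. abel_term t A (x + t a) * block_weight t B"]
    by (simp add: abel_sum_def sum_distrib_right)
  finally show ?thesis
    by (simp add: abel_sum_def[abs_def])
qed

definition abel_closed :: "(nat \<Rightarrow> real) \<Rightarrow> nat set \<Rightarrow> real \<Rightarrow> real" where
  "abel_closed t M x =
    (if card M = 1 then 1 / tsum t M
     else (x + tsum t M) ^ (card M - 2) * (1 + x * (\<Sum>i\<in>M. 1 / t i))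
       - real ((card M - 1) choose 2) * x * (x + tsum t M) ^ (card M - 3))"

lemma sum_shift_mult_inverse_sum_remove:
  assumes "finite M" "\<forall>i\<in>M. t i \<noteq> 0"
  shows "(\<Sum>a\<in>M. (x + t a) * (\<Sum>i\<in>M - {a}. 1 / t i))
       = (real (card M) - 1) * x * (\<Sum>i\<in>M. 1 / t i) + tsum t M * (\<Sum>i\<in>M. 1 / t i) - real (card M)"
proof -
  define T where "T = (\<Sum>i\<in>M. 1 / t i)"
  have "(\<Sum>a\<in>M. (x + t a) * (\<Sum>i\<in>M - {a}. 1 / t i)) = (\<Sum>a\<in>M. x * T - x / t a + t a * T - 1)"
    using assms by (intro sum.cong) (auto simp: sum_diff1 field_simps T_def)
  also have "\<dots> = real (card M) * x * T - x * T + tsum t M * T - real (card M)"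
    by (simp add: sum.distrib sum_subtractf sum_distrib_left[symmetric] sum_distrib_right[symmetric]
        tsum_def T_def divide_inverse)
  finally show ?thesis
    by (simp add: T_def algebra_simps)
qed

lemma sum_abel_closed_remove:
  assumes "finite M" "card M = k + 3" "\<forall>i\<in>M. t i \<noteq> 0"
  defines "s \<equiv> tsum t M" and "T \<equiv> (\<Sum>i\<in>M. 1 / t i)"
  shows "(\<Sum>a\<in>M. abel_closed t (M - {a}) (x + t a))
    = real (k + 1) * (x + s) ^ k * (1 + x * T) + (x + s) ^ (k + 1) * T
      - real ((k + 2) choose 2) * ((x + s) ^ k + x * (real k * (x + s) ^ (k - 1)))"
proof -
  define C3 where "C3 = real ((k + 2) choose 2)"
  define C2 where "C2 = real ((k + 1) choose 2)"
  have "(\<Sum>a\<in>M. abel_closed t (M - {a}) (x + t a))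
      = (\<Sum>a\<in>M. (x + s) ^ k * (1 + (x + t a) * (\<Sum>i\<in>M - {a}. 1 / t i))
                   - C2 * (x + t a) * (x + s) ^ (k - 1))"
    using assms(1,2) by (intro sum.cong) (auto simp: abel_closed_def C2_def s_def tsum_remove)
  also have "\<dots> = (x + s) ^ k * (\<Sum>a\<in>M. 1 + (x + t a) * (\<Sum>i\<in>M - {a}. 1 / t i))
      - C2 * (\<Sum>a\<in>M. x + t a) * (x + s) ^ (k - 1)"
    by (simp add: sum_subtractf sum_distrib_left sum_distrib_right mult.assoc)
  also have "\<dots> = (x + s) ^ k * ((real k + 2) * x * T + s * T) - C2 * ((real k + 3) * x + s) * (x + s) ^ (k - 1)"
    using sum_shift_mult_inverse_sum_remove[OF assms(1,3), of x] assms(2)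
    by (simp add: sum.distrib s_def T_def tsum_def algebra_simps)
  also have "\<dots> = real (k + 1) * (x + s) ^ k * (1 + x * T) + (x + s) ^ (k + 1) * T
      - C3 * ((x + s) ^ k + x * (real k * (x + s) ^ (k - 1)))"
    \<comment> \<open>at k = 0 the truncated exponent k - 1 only occurs with coefficient 0\<close>
  proof (cases k)
    case 0
    have "C3 = 1" "C2 = 0"
      unfolding C3_def C2_def 0 by (simp_all add: choose_two)
    then show ?thesis unfolding 0 by (simp add: algebra_simps)
  next
    case (Suc j)
    have C: "C3 = (real j + 3) * (real j + 2) / 2" "C2 = (real j + 2) * (real j + 1) / 2"
      unfolding C3_def C2_def choose_two Suc by (simp_all add: real_of_nat_div algebra_simps)
    show ?thesis
      unfolding Suc C by (simp add: field_simps)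
  qed
  finally show ?thesis
    unfolding C3_def .
qed

lemma has_real_derivative_abel_closed:
  assumes "finite M" "card M \<ge> 2" "\<forall>i\<in>M. t i \<noteq> 0"
  shows "(abel_closed t M has_real_derivative (\<Sum>a\<in>M. abel_closed t (M - {a}) (x + t a))) (at x)"
proof -
  define s where "s = tsum t M"
  define T where "T = (\<Sum>i\<in>M. 1 / t i)"
  consider "card M = 2" | k where "card M = k + 3"
    using assms(2) by (metis add.commute le_Suc_eq le_iff_add numeral_2_eq_2 numeral_3_eq_3 add_Suc_right)
  then show ?thesis
  proof cases
    case 1
    then obtain p q where pq: "M = {p, q}" "p \<noteq> q" by (meson card_2_iff)
    have "abel_closed t M = (\<lambda>x. 1 + x * T)"
      using 1 by (simp add: abel_closed_def fun_eq_iff T_def)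
    moreover have "(\<Sum>a\<in>M. abel_closed t (M - {a}) (x + t a)) = T"
      using pq by (simp add: abel_closed_def tsum_def T_def insert_Diff_if)
    ultimately show ?thesis
      by (auto intro!: derivative_eq_intros)
  next
    case 2
    have "abel_closed t M = (\<lambda>x. (x + s) ^ (k + 1) * (1 + x * T) - real ((k + 2) choose 2) * x * (x + s) ^ k)"
      using 2 by (simp add: abel_closed_def fun_eq_iff s_def T_def)
    moreover have "((\<lambda>x. (x + s) ^ (k + 1) * (1 + x * T) - real ((k + 2) choose 2) * x * (x + s) ^ k)
        has_real_derivative real (k + 1) * (x + s) ^ k * (1 + x * T) + (x + s) ^ (k + 1) * T
          - real ((k + 2) choose 2) * ((x + s) ^ k + x * (real k * (x + s) ^ (k - 1)))) (at x)"
      by (intro derivative_eq_intros) (auto simp: algebra_simps)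
    ultimately show ?thesis
      using sum_abel_closed_remove[OF assms(1) 2 assms(3), of x] by (simp add: s_def T_def)
  qed
qed

lemma abel_sum_zero:
  assumes "finite M" "M \<noteq> {}"
  shows "abel_sum t M 0 = block_weight t M"
proof -
  have "abel_sum t M 0 = (\<Sum>A\<in>{A. A \<subset> M}. if A = {} then block_weight t M else 0)"
    unfolding abel_sum_def by (intro sum.cong) (auto simp: abel_term_def)
  also have "\<dots> = block_weight t M"
    using assms finite_psubsets[OF assms(1)] by (simp add: sum.delta' psubset_eq)
  finally show ?thesis .
qed

lemma abel_closed_zero:
  assumes "card M \<ge> 2"
  shows "abel_closed t M 0 = block_weight t M"
proof -
  have "int (card M) - 2 = int (card M - 2)"
    using assms by simp
  then have "block_weight t M = tsum t M ^ (card M - 2)"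
    unfolding block_weight_def by (simp only: power_int_of_nat)
  then show ?thesis
    using assms by (simp add: abel_closed_def)
qed

lemma abel_sum_eq_abel_closed:
  assumes "finite M" "M \<noteq> {}" "\<forall>i\<in>M. t i \<noteq> 0"
  shows "abel_sum t M x = abel_closed t M x"
  using assms
proof (induction M arbitrary: x rule: finite_remove_induct)
  case empty
  then show ?case by simp
next
  case (remove M)
  show ?case
  proof (cases "card M = 1")
    case True
    then obtain b where "M = {b}" by (rule card_1_singletonE)
    moreover have "{A. A \<subset> {b}} = {{}}" by auto
    ultimately show ?thesis
      by (simp add: abel_sum_def abel_closed_def abel_term_def block_weight_def tsum_def
          power_int_minus divide_inverse)
  next
    case False
    then have card: "card M \<ge> 2"
      using remove.hyps(1,2) by (simp add: Suc_le_eq card_gt_0_iff numeral_2_eq_2 le_neq_implies_less)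
    have IH: "abel_sum t (M - {a}) y = abel_closed t (M - {a}) y" if "a \<in> M" for a y
      using that remove Diff_singleton_nonempty_if_card_ge_2[OF card, of a] by (intro remove.IH) auto
    have "((\<lambda>x. abel_sum t M x - abel_closed t M x) has_real_derivative 0) (at y)" for y
    proof -
      have "(\<Sum>a\<in>M. abel_sum t (M - {a}) (y + t a)) = (\<Sum>a\<in>M. abel_closed t (M - {a}) (y + t a))"
        by (rule sum.cong[OF refl]) (rule IH)
      then show ?thesis
        using DERIV_diff[OF has_real_derivative_abel_sum[OF remove.hyps(1), of t y]
            has_real_derivative_abel_closed[OF remove.hyps(1) card remove.prems(2), of y]]
        by simp
    qed
    then have "abel_sum t M x - abel_closed t M x = abel_sum t M 0 - abel_closed t M 0"
      by (intro DERIV_isconst_all allI)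
    also have "\<dots> = 0"
      using remove.hyps(1,2) card by (simp add: abel_sum_zero abel_closed_zero)
    finally show ?thesis
      by simp
  qed
qed

lemma sum_complementary_pairs:
  fixes f :: "'a set \<Rightarrow> real"
  assumes "finite M" "m \<in> M"
  shows "(\<Sum>I\<in>{I. I \<subseteq> M \<and> I \<noteq> {} \<and> I \<noteq> M}. f I * f (M - I))
       = 2 * (\<Sum>A\<in>{A. A \<subset> M - {m}}. f (insert m A) * f (M - {m} - A))"
proof -
  define Q where "Q = {I. I \<subseteq> M \<and> I \<noteq> {} \<and> I \<noteq> M}"
  define h where "h I = f I * f (M - I)" for I
  have "finite Q"
    unfolding Q_def using assms(1) by (auto intro: finite_subset[of _ "Pow M"])
  have double_complement: "M - (M - I) = I" if "I \<subseteq> M" for I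
    using that by blast
  have reinsert: "insert m (I - {m}) = I" "M - {m} - (I - {m}) = M - I" if "m \<in> I" for I
    using that by blast+
  have "sum h Q = sum h ({I\<in>Q. m \<in> I} \<union> {I\<in>Q. m \<notin> I})"
    by (rule arg_cong[where f = "sum h"]) blast
  also have "\<dots> = sum h {I\<in>Q. m \<in> I} + sum h {I\<in>Q. m \<notin> I}"
    using \<open>finite Q\<close> by (intro sum.union_disjoint) auto
  also have "sum h {I\<in>Q. m \<notin> I} = sum h {I\<in>Q. m \<in> I}"
    using assms(2) double_complement
    by (intro sum.reindex_bij_witness[of _ "\<lambda>I. M - I" "\<lambda>I. M - I"]) (auto simp: Q_def h_def)
  also have "sum h {I\<in>Q. m \<in> I} = (\<Sum>A\<in>{A. A \<subset> M - {m}}. f (insert m A) * f (M - {m} - A))"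
    using assms(2) reinsert
    by (intro sum.reindex_bij_witness[of _ "insert m" "\<lambda>I. I - {m}"]) (auto simp: Q_def h_def)
  finally show ?thesis
    unfolding Q_def h_def by simp
qed

lemma of_nat_choose_two_mult_powi:
  "real (n choose 2) * x powi (int n - 2) = real (n choose 2) * x ^ (n - 2)"
proof (cases "n \<ge> 2")
  case True
  then have "int n - 2 = int (n - 2)" by simp
  then show ?thesis by (simp only: power_int_of_nat)
qed simp

lemma abel_closed_remove_at:
  assumes "finite M" "card M \<ge> 2" "m \<in> M" "\<forall>i\<in>M. t i \<noteq> 0" "tsum t M \<noteq> 0"
  shows "abel_closed t (M - {m}) (t m) / t m
    = tsum t M powi (int (card M) - 3) * (\<Sum>i\<in>M. 1 / t i)
      - real ((card M - 2) choose 2) * tsum t M powi (int (card M) - 4)"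
proof -
  define s where "s = tsum t M"
  define T where "T = (\<Sum>i\<in>M. 1 / t i)"
  have tm: "t m \<noteq> 0" using assms(3,4) by blast
  have remove: "tsum t (M - {m}) = s - t m" "(\<Sum>i\<in>M - {m}. 1 / t i) = T - 1 / t m"
    using assms(1,3) by (simp_all add: tsum_remove s_def T_def sum_diff1)
  consider "card M = 2" | k where "card M = k + 3"
    using assms(2) by (metis add.commute le_Suc_eq le_iff_add numeral_2_eq_2 numeral_3_eq_3 add_Suc_right)
  then show ?thesis
  proof cases
    case 1
    then obtain a where a: "M = {a, m}" "a \<noteq> m"
      using assms(3) by (metis card_2_iff insert_commute insertE singletonD)
    then have "M - {m} = {a}" by auto
    then have "abel_closed t (M - {m}) (t m) / t m = 1 / (t a * t m)"
      by (simp add: abel_closed_def tsum_def)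
    also have "\<dots> = 1 / (t a + t m) * (1 / t a + 1 / t m)"
      using assms(4,5) a by (simp add: tsum_def field_simps)
    also have "\<dots> = s powi (int (card M) - 3) * T - real ((card M - 2) choose 2) * s powi (int (card M) - 4)"
      using 1 a by (simp add: s_def T_def tsum_def power_int_minus divide_inverse)
    finally show ?thesis
      by (simp add: s_def T_def)
  next
    case 2
    have "abel_closed t (M - {m}) (t m) = s ^ k * (1 + t m * (T - 1 / t m))
        - real ((k + 1) choose 2) * t m * s ^ (k - 1)"
      using 2 assms(1,3) remove by (simp add: abel_closed_def)
    also have "\<dots> = t m * (s ^ k * T - real ((k + 1) choose 2) * s ^ (k - 1))"
      using tm by (simp add: field_simps)
    finally have "abel_closed t (M - {m}) (t m) / t m
        = s ^ k * T - real ((k + 1) choose 2) * s ^ (k + 1 - 2)"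
      using tm by simp
    also have "\<dots> = s powi (int (card M) - 3) * T - real ((card M - 2) choose 2) * s powi (int (card M) - 4)"
      using 2 of_nat_choose_two_mult_powi[of "k + 1" s] by (simp add: algebra_simps)
    finally show ?thesis
      by (simp add: s_def T_def)
  qed
qed

lemma sum_block_weight_complementary_pairs:
  assumes "finite M" "card M \<ge> 2" "\<forall>i\<in>M. t i \<noteq> 0" "tsum t M \<noteq> 0"
  shows "(\<Sum>I\<in>{I. I \<subseteq> M \<and> I \<noteq> {} \<and> I \<noteq> M}. block_weight t I * block_weight t (M - I))
    = 2 * tsum t M powi (int (card M) - 3) * (\<Sum>i\<in>M. 1 / t i)
      - 2 * real ((card M - 2) choose 2) * tsum t M powi (int (card M) - 4)"
proof -
  obtain m where m: "m \<in> M"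
    using assms(2) by fastforce
  have "M - {m} \<noteq> {}"
    using assms(2) by (rule Diff_singleton_nonempty_if_card_ge_2)
  have "(\<Sum>A\<in>{A. A \<subset> M - {m}}. block_weight t (insert m A) * block_weight t (M - {m} - A))
      = abel_sum t (M - {m}) (t m) / t m"
    unfolding abel_sum_def sum_divide_distrib
  proof (rule sum.cong[OF refl])
    fix A assume "A \<in> {A. A \<subset> M - {m}}"
    then have "finite A" "m \<notin> A"
      using assms(1) by (auto intro: finite_subset)
    then show "block_weight t (insert m A) * block_weight t (M - {m} - A)
        = abel_term t A (t m) * block_weight t (M - {m} - A) / t m"
      using block_weight_insert[of A m t] assms(3) m by simp
  qed
  also have "\<dots> = abel_closed t (M - {m}) (t m) / t m"
    using assms(1,3) \<open>M - {m} \<noteq> {}\<close> by (simp add: abel_sum_eq_abel_closed)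
  finally show ?thesis
    using sum_complementary_pairs[OF assms(1) m, of "block_weight t"]
      abel_closed_remove_at[OF assms(1,2) m assms(3,4)]
    by (simp add: algebra_simps)
qed

theorem lemma4p2:
  fixes m :: nat
  assumes "m \<ge> 2"
  shows "\<exists>F :: real poly. \<forall>t :: nat \<Rightarrow> real.
    (\<forall>i\<in>{1..m}. t i \<noteq> 0) \<longrightarrow> tsum t {1..m} \<noteq> 0 \<longrightarrow>
    (\<Sum>I\<in>{I. I \<subseteq> {1..m} \<and> I \<noteq> {} \<and> I \<noteq> {1..m}}.
        tsum t I powi (int (card I) - 2) *
        tsum t ({1..m} - I) powi (int (card ({1..m} - I)) - 2))
      - 2 * tsum t {1..m} powi (int m - 3) * (\<Sum>i\<in>{1..m}. 1 / t i)
    = poly F (tsum t {1..m})"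
proof -
  define c where "c = - 2 * real ((m - 2) choose 2)"
  have "(\<Sum>I\<in>{I. I \<subseteq> {1..m} \<and> I \<noteq> {} \<and> I \<noteq> {1..m}}.
          block_weight t I * block_weight t ({1..m} - I))
        - 2 * tsum t {1..m} powi (int m - 3) * (\<Sum>i\<in>{1..m}. 1 / t i)
      = poly (monom c (m - 4)) (tsum t {1..m})"
    if "\<forall>i\<in>{1..m}. t i \<noteq> 0" "tsum t {1..m} \<noteq> 0" for t
  proof -
    have "(\<Sum>I\<in>{I. I \<subseteq> {1..m} \<and> I \<noteq> {} \<and> I \<noteq> {1..m}}.
            block_weight t I * block_weight t ({1..m} - I))
          - 2 * tsum t {1..m} powi (int m - 3) * (\<Sum>i\<in>{1..m}. 1 / t i)
        = c * tsum t {1..m} powi (int (m - 2) - 2)"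
      using sum_block_weight_complementary_pairs[of "{1..m}" t] that assms
      by (simp add: c_def algebra_simps)
    also have "\<dots> = poly (monom c (m - 4)) (tsum t {1..m})"
      using of_nat_choose_two_mult_powi[of "m - 2" "tsum t {1..m}"]
      by (simp add: c_def poly_monom)
    finally show ?thesis .
  qed
  then show ?thesis
    unfolding block_weight_def by blast
qed

end
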